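(* Let $i\ge 1$ be an integer and $k\ge 10i+35$. Let $H$ be a weighted graph with edge weight $\omega:E(H)\to\{3,4,5\}$ which contains no cycle of odd weight smaller than $2k+1$. Let $B_1,B_2$ be sets of vertices of $H$ with $d(B_1,B_2)\ge 2i+2$, and let $P$ be a path of minimal weight among all paths between $B_1$ and $B_2$. If $N^{3i+1}[B_1]$ and $N^{3i+1}[B_2]$ are weighted bipartite, then $N^i[B_1\cup B_2\cup P]$ is weighted bipartite.
   Context: The weight of a subgraph is the sum of the weights of its edges. $d(B_1,B_2)$ is the unweighted distance, i.e. the minimum number of edges of a path between a vertex of $B_1$ and a vertex of $B_2$. $N^j[S]$ is the set of vertices at unweighted distance at most $j$ from some vertex of $S$ (for a path, of its vertex set). A vertex set $S$ is weighted bipartite if $H[S]$ contains no cycle of odd weight. *)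

theory Defs
  imports Main "HOL-Library.Extended_Nat"
begin

definition graph :: "'a set \<Rightarrow> 'a set set \<Rightarrow> bool" where
  "graph V E \<longleftrightarrow> finite V \<and> (\<forall>e\<in>E. e \<subseteq> V \<and> card e = 2)"

definition adj :: "'a set set \<Rightarrow> 'a \<Rightarrow> 'a \<Rightarrow> bool" where
  "adj E u v \<longleftrightarrow> {u, v} \<in> E"

definition is_walk :: "'a set set \<Rightarrow> 'a list \<Rightarrow> bool" where
  "is_walk E xs \<longleftrightarrow> xs \<noteq> [] \<and> (\<forall>i. Suc i < length xs \<longrightarrow> adj E (xs ! i) (xs ! Suc i))"

definition is_path :: "'a set set \<Rightarrow> 'a list \<Rightarrow> bool" where
  "is_path E xs \<longleftrightarrow> is_walk E xs \<and> distinct xs"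

definition walk_len :: "'a list \<Rightarrow> nat" where
  "walk_len xs = length xs - 1"

definition walk_weight :: "('a set \<Rightarrow> nat) \<Rightarrow> 'a list \<Rightarrow> nat" where
  "walk_weight w xs = (\<Sum>i<length xs - 1. w {xs ! i, xs ! Suc i})"

definition is_cycle :: "'a set set \<Rightarrow> 'a list \<Rightarrow> bool" where
  "is_cycle E xs \<longleftrightarrow> length xs \<ge> 3 \<and> is_path E xs \<and> adj E (last xs) (hd xs)"

definition cycle_weight :: "('a set \<Rightarrow> nat) \<Rightarrow> 'a list \<Rightarrow> nat" where
  "cycle_weight w xs = walk_weight w (xs @ [hd xs])"

definition path_between :: "'a set set \<Rightarrow> 'a set \<Rightarrow> 'a set \<Rightarrow> 'a list \<Rightarrow> bool" where
  "path_between E B1 B2 xs \<longleftrightarrow> is_path E xs \<and> hd xs \<in> B1 \<and> last xs \<in> B2"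

text \<open>Unweighted distance between vertex sets: minimum number of edges of a path
  between a vertex of B1 and a vertex of B2 (\<infinity> if there is none).\<close>
definition set_dist :: "'a set set \<Rightarrow> 'a set \<Rightarrow> 'a set \<Rightarrow> enat" where
  "set_dist E B1 B2 = (INF xs \<in> {xs. path_between E B1 B2 xs}. enat (walk_len xs))"

definition closed_nbhd :: "'a set \<Rightarrow> 'a set set \<Rightarrow> nat \<Rightarrow> 'a set \<Rightarrow> 'a set" where
  "closed_nbhd V E j S = {v \<in> V. \<exists>u\<in>S. set_dist E {u} {v} \<le> enat j}"

definition weighted_bipartite :: "'a set set \<Rightarrow> ('a set \<Rightarrow> nat) \<Rightarrow> 'a set \<Rightarrow> bool" where
  "weighted_bipartite E w S \<longleftrightarrow>
     \<not> (\<exists>C. is_cycle E C \<and> set C \<subseteq> S \<and> odd (cycle_weight w C))"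

end

(* A set S is weighted bipartite as soon as it carries a parity potential: a map f with
   w(xy) + f x + f y even on every edge of H[S], since this telescopes to even weight on
   every closed walk in S; conversely a weighted bipartite set carries one.
   On N^i[B1 \<union> B2 \<union> P] we label a vertex x close to P by the weight of a short walk R
   from some P_t to x plus the weight of P up to P_t, and every other vertex by the potential
   of the bipartite ball N^(3i+1)[B_j] it lies near, shifted to agree at the end of P.
   For an edge between two vertices near P, minimality of P bounds the segment of P between
   the two landing points by the detour through the edge, so the resulting closed walk has
   weight at most 2(10i+5) \<le> 2k and is even by the odd girth.  For an edge between a vertex
   near B1 and one near P, minimality of P forces t \<le> 4i+1, hence the walk from the start
   of P along P and back through R stays inside N^(3i+1)[B1], where parities are consistent.
   No vertex near B1 is adjacent to one near B2, as d(B1, B2) \<ge> 2i+2. *)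

theory Submission
  imports Defs
begin

section \<open>Walks\<close>

lemma not_is_walk_Nil [simp]: "\<not> is_walk E []"
  by (simp add: is_walk_def)

lemma is_walk_singleton [simp]: "is_walk E [x]"
  by (simp add: is_walk_def)

lemma is_walk_Cons_Cons [simp]: "is_walk E (x # y # zs) \<longleftrightarrow> adj E x y \<and> is_walk E (y # zs)"
  unfolding is_walk_def by (auto simp: nth_Cons split: nat.split)

lemma walk_weight_Nil [simp]: "walk_weight w [] = 0"
  and walk_weight_singleton [simp]: "walk_weight w [x] = 0"
  by (simp_all add: walk_weight_def)

lemma walk_weight_Cons_Cons [simp]: "walk_weight w (x # y # zs) = w {x, y} + walk_weight w (y # zs)"
proof -
  have "walk_weight w (x # y # zs) = (\<Sum>j<Suc (length zs). w {(x # y # zs) ! j, (x # y # zs) ! Suc j})"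
    by (simp add: walk_weight_def)
  also have "\<dots> = w {x, y} + walk_weight w (y # zs)"
    by (subst sum.lessThan_Suc_shift) (simp add: walk_weight_def)
  finally show ?thesis .
qed

lemma adj_sym: "adj E x y \<Longrightarrow> adj E y x"
  by (simp add: adj_def insert_commute)

lemma is_walk_append_Cons: "is_walk E (xs @ y # ys) \<longleftrightarrow> is_walk E (xs @ [y]) \<and> is_walk E (y # ys)"
  by (induction xs rule: induct_list012) auto

lemma walk_weight_append_Cons: "walk_weight w (xs @ y # ys) = walk_weight w (xs @ [y]) + walk_weight w (y # ys)"
  by (induction xs rule: induct_list012) auto

lemma walk_weight_rev [simp]: "walk_weight w (rev xs) = walk_weight w xs"
proof (induction xs rule: induct_list012)
  case (3 x y zs)
  have "walk_weight w (rev (x # y # zs)) = walk_weight w (rev zs @ [y]) + w {y, x}"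
    using walk_weight_append_Cons[of w "rev zs" y "[x]"] by simp
  then show ?case
    using "3.IH"(2) by (simp add: insert_commute)
qed simp_all

lemma walk_weight_take_drop:
  assumes "t < length xs"
  shows "walk_weight w (take (Suc t) xs) + walk_weight w (drop t xs) = walk_weight w xs"
  using walk_weight_append_Cons[of w "take t xs" "xs ! t" "drop (Suc t) xs"] assms
  by (simp add: id_take_nth_drop[symmetric] take_Suc_conv_app_nth Cons_nth_drop_Suc)

lemma set_tl_subset: "set (tl xs) \<subseteq> set xs"
  by (cases xs) auto

definition walk_betw :: "'a set set \<Rightarrow> 'a \<Rightarrow> 'a list \<Rightarrow> 'a \<Rightarrow> bool" where
  "walk_betw E u xs v \<longleftrightarrow> is_walk E xs \<and> hd xs = u \<and> last xs = v"

lemma walk_betw_nonempty: "walk_betw E u xs v \<Longrightarrow> xs \<noteq> []"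
  by (auto simp: walk_betw_def)

lemma walk_betw_singleton [simp]: "walk_betw E x [x] x"
  by (simp add: walk_betw_def)

lemma walk_betw_edge: "adj E u v \<Longrightarrow> walk_betw E u [u, v] v"
  by (simp add: walk_betw_def)

lemma walk_betw_join:
  assumes "walk_betw E u xs v" "walk_betw E v ys x"
  shows "walk_betw E u (xs @ tl ys) x"
proof -
  obtain as where xs: "xs = as @ [v]"
    using assms(1) by (cases xs rule: rev_cases) (auto simp: walk_betw_def)
  obtain bs where ys: "ys = v # bs"
    using assms(2) by (cases ys) (auto simp: walk_betw_def)
  have "is_walk E (as @ v # bs)"
    using assms is_walk_append_Cons[of E as v bs] by (simp add: walk_betw_def xs ys)
  moreover have "hd (as @ v # bs) = u"
    using assms(1) by (cases as) (simp_all add: walk_betw_def xs)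
  moreover have "last (as @ v # bs) = x"
    using assms(2) by (simp add: walk_betw_def ys)
  ultimately show ?thesis
    by (simp add: walk_betw_def xs ys)
qed

lemma walk_weight_join:
  assumes "walk_betw E u xs v" "walk_betw E v ys x"
  shows "walk_weight w (xs @ tl ys) = walk_weight w xs + walk_weight w ys"
proof -
  obtain as where xs: "xs = as @ [v]"
    using assms(1) by (cases xs rule: rev_cases) (auto simp: walk_betw_def)
  obtain bs where ys: "ys = v # bs"
    using assms(2) by (cases ys) (auto simp: walk_betw_def)
  show ?thesis
    using walk_weight_append_Cons[of w as v bs] by (simp add: xs ys)
qed

lemma set_join:
  assumes "walk_betw E u xs v" "walk_betw E v ys x"
  shows "set (xs @ tl ys) = set xs \<union> set ys"
proof -
  have "xs \<noteq> []" "ys \<noteq> []" "hd ys = last xs"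
    using assms walk_betw_nonempty by (auto simp: walk_betw_def)
  then show ?thesis
    by (cases ys) auto
qed

lemma is_walk_rev: "is_walk E xs \<Longrightarrow> is_walk E (rev xs)"
proof (induction xs rule: induct_list012)
  case (3 x y zs)
  then show ?case
    using is_walk_append_Cons[of E "rev zs" y "[x]"] by (simp add: adj_sym)
qed simp_all

lemma walk_betw_rev: "walk_betw E u xs v \<Longrightarrow> walk_betw E v (rev xs) u"
  by (auto simp: walk_betw_def is_walk_rev hd_rev last_rev)

lemma walk_betw_take:
  assumes "walk_betw E u xs v" "t < length xs"
  shows "walk_betw E u (take (Suc t) xs) (xs ! t)"
proof -
  have "last (take (Suc t) xs) = xs ! t"
    using assms(2) by (simp add: take_Suc_conv_app_nth)
  then show ?thesis
    using assms by (auto simp: walk_betw_def is_walk_def hd_take)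
qed

lemma walk_betw_drop:
  assumes "walk_betw E u xs v" "t < length xs"
  shows "walk_betw E (xs ! t) (drop t xs) v"
  using assms by (auto simp: walk_betw_def is_walk_def hd_drop_conv_nth last_drop)

lemma walk_betw_cut_loop:
  assumes "walk_betw E u (as @ x # bs @ x # cs) v"
  shows "walk_betw E x (x # bs @ [x]) x" "walk_betw E u (as @ x # cs) v"
    and "walk_weight w (as @ x # bs @ x # cs) = walk_weight w (x # bs @ [x]) + walk_weight w (as @ x # cs)"
proof -
  have "is_walk E (as @ [x])" "is_walk E ((x # bs) @ x # cs)"
    using assms is_walk_append_Cons[of E as x "bs @ x # cs"] by (simp_all add: walk_betw_def)
  then have "is_walk E (x # bs @ [x])" "is_walk E (as @ x # cs)"
    using is_walk_append_Cons by (metis append_Cons)+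
  moreover have "hd (as @ x # cs) = u" "last (as @ x # cs) = v"
    using assms by (cases as; simp add: walk_betw_def)+
  ultimately show "walk_betw E x (x # bs @ [x]) x" "walk_betw E u (as @ x # cs) v"
    by (simp_all add: walk_betw_def)
  show "walk_weight w (as @ x # bs @ x # cs) = walk_weight w (x # bs @ [x]) + walk_weight w (as @ x # cs)"
    using walk_weight_append_Cons[of w as x "bs @ x # cs"] walk_weight_append_Cons[of w "x # bs" x cs]
      walk_weight_append_Cons[of w as x cs]
    by simp
qed

lemma walk_betw_shortcut:
  assumes "walk_betw E u xs v"
  shows "\<exists>ys. walk_betw E u ys v \<and> distinct ys \<and> length ys \<le> length xs
    \<and> walk_weight w ys \<le> walk_weight w xs"
  using assms
proof (induction "length xs" arbitrary: xs rule: less_induct)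
  case less
  show ?case
  proof (cases "distinct xs")
    case False
    then obtain as x bs cs where xs: "xs = as @ x # bs @ x # cs"
      using not_distinct_decomp by fastforce
    note loop = walk_betw_cut_loop[OF less.prems[unfolded xs]]
    have "length (as @ x # cs) < length xs"
      by (simp add: xs)
    then show ?thesis
      using less.hyps[OF _ loop(2)] loop(3) unfolding xs by fastforce
  qed (use less.prems in blast)
qed

section \<open>Distances and neighbourhoods\<close>

lemma adj_in_V: "graph V E \<Longrightarrow> adj E x y \<Longrightarrow> x \<in> V \<and> y \<in> V"
  by (auto simp: graph_def adj_def)

lemma not_adj_self: "graph V E \<Longrightarrow> \<not> adj E x x"
  by (auto simp: graph_def adj_def)

lemma walk_in_V: "graph V E \<Longrightarrow> is_walk E xs \<Longrightarrow> hd xs \<in> V \<Longrightarrow> set xs \<subseteq> V"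
  by (induction xs rule: induct_list012) (auto dest: adj_in_V)

lemma walk_weight_le:
  "\<forall>e\<in>E. w e \<le> b \<Longrightarrow> is_walk E xs \<Longrightarrow> walk_weight w xs \<le> b * (length xs - 1)"
  by (induction xs rule: induct_list012) (auto simp: adj_def add_mono)

lemma walk_weight_ge:
  "\<forall>e\<in>E. b \<le> w e \<Longrightarrow> is_walk E xs \<Longrightarrow> b * (length xs - 1) \<le> walk_weight w xs"
  by (induction xs rule: induct_list012) (auto simp: adj_def add_mono)

lemma set_dist_le_walk:
  assumes "walk_betw E u xs v" "u \<in> B1" "v \<in> B2"
  shows "set_dist E B1 B2 \<le> enat (length xs - 1)"
proof -
  obtain ys where ys: "walk_betw E u ys v" "distinct ys" "length ys \<le> length xs"
    using walk_betw_shortcut[OF assms(1), of "\<lambda>_. 0"] by blast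
  then have "path_between E B1 B2 ys"
    using assms by (auto simp: path_between_def is_path_def walk_betw_def)
  then have "set_dist E B1 B2 \<le> enat (walk_len ys)"
    unfolding set_dist_def by (intro INF_lower) simp
  also have "\<dots> \<le> enat (length xs - 1)"
    using ys(3) by (simp add: walk_len_def)
  finally show ?thesis .
qed

lemma walk_length_ge_set_dist:
  assumes "enat m \<le> set_dist E B1 B2" "walk_betw E u xs v" "u \<in> B1" "v \<in> B2"
  shows "Suc m \<le> length xs"
proof -
  have "enat m \<le> enat (length xs - 1)"
    using assms(1) set_dist_le_walk[OF assms(2-4)] by (rule order_trans)
  then show ?thesis
    using walk_betw_nonempty[OF assms(2)] by (cases xs) auto
qed

lemma set_dist_singletons_le_iff:
  "set_dist E {u} {v} \<le> enat j \<longleftrightarrow> (\<exists>xs. walk_betw E u xs v \<and> length xs \<le> Suc j)"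
proof
  let ?paths = "{xs. path_between E {u} {v} xs}"
  assume le: "set_dist E {u} {v} \<le> enat j"
  have "?paths \<noteq> {}"
  proof
    assume "?paths = {}"
    then have "set_dist E {u} {v} = \<infinity>"
      by (simp add: set_dist_def top_enat_def)
    with le show False by simp
  qed
  then have "set_dist E {u} {v} \<in> (\<lambda>xs. enat (walk_len xs)) ` ?paths"
    unfolding set_dist_def Inf_enat_def by (auto intro: LeastI)
  then obtain xs where "path_between E {u} {v} xs" "set_dist E {u} {v} = enat (walk_len xs)"
    by auto
  then show "\<exists>xs. walk_betw E u xs v \<and> length xs \<le> Suc j"
    using le by (auto simp: path_between_def is_path_def walk_betw_def walk_len_def)
next
  assume "\<exists>xs. walk_betw E u xs v \<and> length xs \<le> Suc j"
  then show "set_dist E {u} {v} \<le> enat j"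
    using set_dist_le_walk[of E u _ v "{u}" "{v}"] by (fastforce intro: order_trans)
qed

lemma mem_closed_nbhd_iff:
  "x \<in> closed_nbhd V E j S \<longleftrightarrow> x \<in> V \<and> (\<exists>u\<in>S. \<exists>xs. walk_betw E u xs x \<and> length xs \<le> Suc j)"
  by (simp add: closed_nbhd_def set_dist_singletons_le_iff)

lemma closed_nbhd_Un: "closed_nbhd V E j (S \<union> T) = closed_nbhd V E j S \<union> closed_nbhd V E j T"
  by (auto simp: closed_nbhd_def)

lemma closed_nbhd_mono: "j \<le> l \<Longrightarrow> closed_nbhd V E j S \<subseteq> closed_nbhd V E l S"
  by (auto simp: closed_nbhd_def) (meson enat_ord_simps(1) order_trans)

lemma walk_in_closed_nbhd:
  assumes "graph V E" "S \<subseteq> V" "walk_betw E u xs v" "u \<in> S" "length xs \<le> Suc j"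
  shows "set xs \<subseteq> closed_nbhd V E j S"
proof
  fix y assume "y \<in> set xs"
  then obtain t where t: "t < length xs" "xs ! t = y"
    by (auto simp: in_set_conv_nth)
  have "walk_betw E u (take (Suc t) xs) y"
    using walk_betw_take[OF assms(3) t(1)] t(2) by simp
  moreover have "length (take (Suc t) xs) \<le> Suc j"
    using assms(5) by simp
  moreover have "y \<in> V"
    using walk_in_V[OF assms(1)] assms(2-4) \<open>y \<in> set xs\<close> by (auto simp: walk_betw_def)
  ultimately show "y \<in> closed_nbhd V E j S"
    using assms(4) unfolding mem_closed_nbhd_iff by blast
qed

lemma walk_end_in_closed_nbhd:
  assumes "graph V E" "S \<subseteq> V" "walk_betw E u xs v" "u \<in> S" "length xs \<le> Suc j"
  shows "v \<in> closed_nbhd V E j S"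
  using walk_in_closed_nbhd[OF assms] last_in_set[OF walk_betw_nonempty[OF assms(3)]] assms(3)
  by (auto simp: walk_betw_def)

section \<open>Odd cycles and parity potentials\<close>

lemma closed_walk_is_cycle:
  assumes "graph V E" "walk_betw E u (cs @ [u]) u" "distinct cs" "odd (walk_weight w (cs @ [u]))"
  shows "is_cycle E cs" "cycle_weight w cs = walk_weight w (cs @ [u])"
proof -
  obtain bs c where cs: "cs = bs @ [c]"
    using assms(4) by (cases cs rule: rev_cases) auto
  have hd_cs: "hd cs = u"
    using assms(2) by (cases bs) (simp_all add: walk_betw_def cs)
  have walk: "is_walk E cs" "adj E (last cs) (hd cs)"
    using assms(2) is_walk_append_Cons[of E bs c "[u]"] hd_cs by (simp_all add: walk_betw_def cs)
  have "length cs \<ge> 3"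
  proof (rule ccontr)
    assume "\<not> length cs \<ge> 3"
    then consider "bs = []" | b where "bs = [b]"
      using cs by (cases bs; cases "tl bs") auto
    then show False
      using walk hd_cs not_adj_self[OF assms(1)] assms(4) by cases (auto simp: cs insert_commute)
  qed
  then show "is_cycle E cs"
    using walk assms(3) by (simp add: is_cycle_def is_path_def)
  show "cycle_weight w cs = walk_weight w (cs @ [u])"
    by (simp add: cycle_weight_def hd_cs)
qed

lemma odd_closed_walk_has_odd_cycle:
  assumes "graph V E" "walk_betw E u xs u" "odd (walk_weight w xs)"
  shows "\<exists>C. is_cycle E C \<and> set C \<subseteq> set xs \<and> odd (cycle_weight w C)
    \<and> cycle_weight w C \<le> walk_weight w xs"
  using assms(2,3)
proof (induction "length xs" arbitrary: u xs rule: less_induct)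
  case less
  obtain cs where xs: "xs = cs @ [u]"
    using less.prems(1) by (cases xs rule: rev_cases) (auto simp: walk_betw_def)
  show ?case
  proof (cases "distinct cs")
    case True
    then have "is_cycle E cs" "cycle_weight w cs = walk_weight w xs"
      using closed_walk_is_cycle[OF assms(1)] less.prems by (simp_all add: xs)
    then show ?thesis
      using less.prems(2) by (auto simp: xs)
  next
    case False
    then obtain as x bs cs' where cs: "cs = as @ x # bs @ x # cs'"
      using not_distinct_decomp by fastforce
    have "walk_betw E u (as @ x # bs @ x # cs' @ [u]) u"
      using less.prems(1) by (simp add: xs cs)
    note split = walk_betw_cut_loop[OF this]
    have weight: "walk_weight w xs = walk_weight w (x # bs @ [x]) + walk_weight w (as @ x # cs' @ [u])"
      using split(3) by (simp add: xs cs)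
    have shorter: "length (x # bs @ [x]) < length xs" "length (as @ x # cs' @ [u]) < length xs"
      by (simp_all add: xs cs)
    have sets: "set (x # bs @ [x]) \<subseteq> set xs" "set (as @ x # cs' @ [u]) \<subseteq> set xs"
      by (auto simp: xs cs)
    consider "odd (walk_weight w (x # bs @ [x]))" | "odd (walk_weight w (as @ x # cs' @ [u]))"
      using less.prems(2) weight by fastforce
    then show ?thesis
    proof cases
      case 1
      then show ?thesis
        using less.hyps[OF shorter(1) split(1)] sets(1) weight by fastforce
    next
      case 2
      then show ?thesis
        using less.hyps[OF shorter(2) split(2)] sets(2) weight by fastforce
    qed
  qed
qed

lemma even_closed_walk_if_weighted_bipartite:
  assumes "graph V E" "weighted_bipartite E w A" "walk_betw E u xs u" "set xs \<subseteq> A"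
  shows "even (walk_weight w xs)"
  using odd_closed_walk_has_odd_cycle[OF assms(1,3)] assms(2,4)
  unfolding weighted_bipartite_def by blast

definition parity_potential :: "'a set set \<Rightarrow> ('a set \<Rightarrow> nat) \<Rightarrow> 'a set \<Rightarrow> ('a \<Rightarrow> nat) \<Rightarrow> bool" where
  "parity_potential E w S f \<longleftrightarrow> (\<forall>x\<in>S. \<forall>y\<in>S. adj E x y \<longrightarrow> even (w {x, y} + f x + f y))"

lemma parity_potential_walk:
  assumes "parity_potential E w S f" "is_walk E xs" "set xs \<subseteq> S"
  shows "even (walk_weight w xs + f (hd xs) + f (last xs))"
  using assms(2,3)
proof (induction xs rule: induct_list012)
  case (3 x y zs)
  then have "even (walk_weight w (y # zs) + f y + f (last (y # zs)))" "even (w {x, y} + f x + f y)"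
    using assms(1) by (auto simp: parity_potential_def)
  then show ?case
    by simp presburger
qed simp_all

lemma weighted_bipartite_if_parity_potential:
  assumes "parity_potential E w S f"
  shows "weighted_bipartite E w S"
  unfolding weighted_bipartite_def
proof
  assume "\<exists>C. is_cycle E C \<and> set C \<subseteq> S \<and> odd (cycle_weight w C)"
  then obtain C where C: "is_cycle E C" "set C \<subseteq> S" "odd (cycle_weight w C)"
    by blast
  then have "walk_betw E (hd C) C (last C)" "adj E (last C) (hd C)"
    by (simp_all add: is_cycle_def is_path_def walk_betw_def)
  then have "walk_betw E (hd C) (C @ [hd C]) (hd C)"
    using walk_betw_join[OF _ walk_betw_edge] by fastforce
  moreover have "set (C @ [hd C]) \<subseteq> S"
    using C(2) hd_in_set[OF walk_betw_nonempty[OF \<open>walk_betw E (hd C) C (last C)\<close>]] by auto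
  ultimately have "even (cycle_weight w C + f (hd C) + f (hd C))"
    using parity_potential_walk[OF assms] by (fastforce simp: cycle_weight_def walk_betw_def)
  with C(3) show False
    by simp
qed

lemma rooted_walks:
  obtains root W where "\<And>x. x \<in> A \<Longrightarrow> walk_betw E (root x) (W x) x" "\<And>x. x \<in> A \<Longrightarrow> set (W x) \<subseteq> A"
    "\<And>x y. x \<in> A \<Longrightarrow> y \<in> A \<Longrightarrow> adj E x y \<Longrightarrow> root y = root x"
proof -
  define reach where "reach r x \<longleftrightarrow> (\<exists>W. walk_betw E r W x \<and> set W \<subseteq> A)" for r x
  define root where "root x = (SOME r. reach r x)" for x
  have "reach (root x) x" if "x \<in> A" for x
  proof -
    have "reach x x"
      using that unfolding reach_def by (intro exI[of _ "[x]"]) simp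
    then show ?thesis
      unfolding root_def by (rule someI)
  qed
  then have "\<forall>x\<in>A. \<exists>W. walk_betw E (root x) W x \<and> set W \<subseteq> A"
    by (auto simp: reach_def)
  then have "\<exists>W. \<forall>x\<in>A. walk_betw E (root x) (W x) x \<and> set (W x) \<subseteq> A"
    by (rule bchoice)
  then obtain W where W: "\<forall>x\<in>A. walk_betw E (root x) (W x) x \<and> set (W x) \<subseteq> A"
    by blast
  have reach_step: "reach r y" if reach: "reach r x" and xy: "adj E x y" and "y \<in> A" for r x y
  proof -
    obtain V where "walk_betw E r V x" "set V \<subseteq> A"
      using reach unfolding reach_def by blast
    then show ?thesis
      using walk_betw_join[OF _ walk_betw_edge[OF xy]] \<open>y \<in> A\<close>
      unfolding reach_def by (intro exI[of _ "V @ [y]"]) auto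
  qed
  have root_eq: "root y = root x" if x: "x \<in> A" and y: "y \<in> A" and xy: "adj E x y" for x y
  proof -
    have "reach r x \<longleftrightarrow> reach r y" for r
      using reach_step[OF _ xy y] reach_step[OF _ adj_sym[OF xy] x] by blast
    then show ?thesis
      unfolding root_def by simp
  qed
  from W root_eq show thesis
    by (intro that[of root W]) auto
qed

lemma parity_potential_if_weighted_bipartite:
  assumes "graph V E" "weighted_bipartite E w A"
  shows "\<exists>f. parity_potential E w A f"
proof -
  obtain root W where W: "\<And>x. x \<in> A \<Longrightarrow> walk_betw E (root x) (W x) x"
      "\<And>x. x \<in> A \<Longrightarrow> set (W x) \<subseteq> A"
    and same_root: "\<And>x y. x \<in> A \<Longrightarrow> y \<in> A \<Longrightarrow> adj E x y \<Longrightarrow> root y = root x"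
    using rooted_walks[where A = A and E = E] by blast
  have "even (w {x, y} + walk_weight w (W x) + walk_weight w (W y))"
    if x: "x \<in> A" and y: "y \<in> A" and xy: "adj E x y" for x y
  proof -
    have Wxy: "walk_betw E (root x) (W x @ tl [x, y]) y"
      using walk_betw_join[OF W(1)[OF x] walk_betw_edge[OF xy]] .
    have Wy_rev: "walk_betw E y (rev (W y)) (root x)"
      using walk_betw_rev[OF W(1)[OF y]] same_root[OF x y xy] by simp
    have "walk_betw E (root x) ((W x @ tl [x, y]) @ tl (rev (W y))) (root x)"
      using walk_betw_join[OF Wxy Wy_rev] .
    moreover have "set ((W x @ tl [x, y]) @ tl (rev (W y))) \<subseteq> A"
      using W(2)[OF x] W(2)[OF y] y set_tl_subset[of "rev (W y)"] by auto
    ultimately have "even (walk_weight w ((W x @ tl [x, y]) @ tl (rev (W y))))"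
      using even_closed_walk_if_weighted_bipartite[OF assms] by blast
    then show ?thesis
      unfolding walk_weight_join[OF Wxy Wy_rev] walk_weight_join[OF W(1)[OF x] walk_betw_edge[OF xy]]
      by (simp add: ac_simps)
  qed
  then have "parity_potential E w A (\<lambda>x. walk_weight w (W x))"
    unfolding parity_potential_def by blast
  then show ?thesis
    by blast
qed

section \<open>Minimum-weight walks between two sets\<close>

definition prefix_weight :: "('a set \<Rightarrow> nat) \<Rightarrow> 'a list \<Rightarrow> nat \<Rightarrow> nat" where
  "prefix_weight w xs t = walk_weight w (take (Suc t) xs)"

lemma prefix_weight_rev:
  assumes "t < length xs"
  shows "prefix_weight w (rev xs) (length xs - 1 - t) + prefix_weight w xs t = walk_weight w xs"
proof -
  have "take (Suc (length xs - 1 - t)) (rev xs) = rev (drop t xs)"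
    using assms by (simp add: rev_drop Suc_diff_Suc)
  then show ?thesis
    using walk_weight_take_drop[OF assms, of w] by (simp add: prefix_weight_def)
qed

locale shortest_walk =
  fixes V :: "'a set" and E :: "'a set set" and w :: "'a set \<Rightarrow> nat"
    and B1 B2 :: "'a set" and P :: "'a list"
  assumes graph: "graph V E"
    and weights: "\<forall>e\<in>E. w e \<in> {3, 4, 5}"
    and B1_subset: "B1 \<subseteq> V"
    and P_walk: "walk_betw E (hd P) P (last P)"
    and hd_P: "hd P \<in> B1" and last_P: "last P \<in> B2"
    and P_minimal: "\<And>u Q v. walk_betw E u Q v \<Longrightarrow> u \<in> B1 \<Longrightarrow> v \<in> B2
      \<Longrightarrow> walk_weight w P \<le> walk_weight w Q"
begin

lemma prefix_weight_le:
  assumes "walk_betw E u X (P ! t)" "u \<in> B1" "t < length P"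
  shows "prefix_weight w P t \<le> walk_weight w X"
proof -
  have suffix: "walk_betw E (P ! t) (drop t P) (last P)"
    using walk_betw_drop[OF P_walk assms(3)] .
  have "walk_weight w P \<le> walk_weight w (X @ tl (drop t P))"
    using P_minimal[OF walk_betw_join[OF assms(1) suffix] assms(2) last_P] .
  also have "\<dots> = walk_weight w X + walk_weight w (drop t P)"
    using walk_weight_join[OF assms(1) suffix] .
  finally show ?thesis
    using walk_weight_take_drop[OF assms(3), of w] by (simp add: prefix_weight_def)
qed

lemma prefix_weight_le_add:
  assumes "walk_betw E (P ! s) X (P ! t)" "s < length P" "t < length P"
  shows "prefix_weight w P t \<le> prefix_weight w P s + walk_weight w X"
proof -
  have prefix: "walk_betw E (hd P) (take (Suc s) P) (P ! s)"
    using walk_betw_take[OF P_walk assms(2)] .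
  show ?thesis
    using prefix_weight_le[OF walk_betw_join[OF prefix assms(1)] hd_P assms(3)]
    unfolding walk_weight_join[OF prefix assms(1)] prefix_weight_def .
qed

lemma P_segment:
  assumes "s \<le> t" "t < length P"
  obtains Sg where "walk_betw E (P ! s) Sg (P ! t)" "length Sg = Suc t - s"
    "prefix_weight w P s + walk_weight w Sg = prefix_weight w P t"
proof
  let ?T = "take (Suc t) P"
  have s: "s < length ?T" "?T ! s = P ! s" "take (Suc s) ?T = take (Suc s) P"
    using assms by (simp_all add: min_def)
  show "walk_betw E (P ! s) (drop s ?T) (P ! t)"
    using walk_betw_drop[OF walk_betw_take[OF P_walk assms(2)] s(1)] s(2) by simp
  show "length (drop s ?T) = Suc t - s"
    using assms by simp
  show "prefix_weight w P s + walk_weight w (drop s ?T) = prefix_weight w P t"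
    using walk_weight_take_drop[OF s(1), of w] s(3) by (simp add: prefix_weight_def)
qed

lemma weight_bounds: "\<forall>e\<in>E. 3 \<le> w e" "\<forall>e\<in>E. w e \<le> 5"
  using weights by auto

lemma walk_weight_le_5: "walk_betw E u xs v \<Longrightarrow> walk_weight w xs \<le> 5 * (length xs - 1)"
  using walk_weight_le[OF weight_bounds(2)] by (simp add: walk_betw_def)

lemma P_index_bound:
  assumes "walk_betw E u Q (P ! t)" "u \<in> B1" "t < length P"
  shows "3 * t \<le> 5 * (length Q - 1)"
proof -
  have "3 * t \<le> prefix_weight w P t"
    using walk_weight_ge[OF weight_bounds(1)] walk_betw_take[OF P_walk assms(3)] assms(3)
    by (fastforce simp: prefix_weight_def walk_betw_def)
  also have "\<dots> \<le> walk_weight w Q"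
    using prefix_weight_le[OF assms] .
  also have "\<dots> \<le> 5 * (length Q - 1)"
    using walk_weight_le_5[OF assms(1)] .
  finally show ?thesis .
qed

(* Early vertices of P are reached along P; a later P_s is reached along Q and then back
   along P, which is short because P_index_bound gives t \<le> 4i+1. *)
lemma P_prefix_in_nbhd:
  assumes "walk_betw E u Q (P ! t)" "u \<in> B1" "t < length P" "length Q \<le> 2 * i + 2"
  shows "set (take (Suc t) P) \<subseteq> closed_nbhd V E (3 * i + 1) B1"
proof
  fix v assume "v \<in> set (take (Suc t) P)"
  then obtain s where "s < length (take (Suc t) P)" "v = take (Suc t) P ! s"
    by (metis in_set_conv_nth)
  then have s: "s \<le> t" "v = P ! s"
    by simp_all
  show "v \<in> closed_nbhd V E (3 * i + 1) B1"
  proof (cases "s \<le> 3 * i + 1")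
    case True
    have "walk_betw E (hd P) (take (Suc s) P) v"
      using walk_betw_take[OF P_walk] s assms(3) by simp
    then show ?thesis
      using walk_end_in_closed_nbhd[OF graph B1_subset _ hd_P] True by simp
  next
    case False
    obtain Sg where Sg: "walk_betw E (P ! s) Sg (P ! t)" "length Sg = Suc t - s"
      using P_segment[OF s(1) assms(3)] by blast
    have "3 * t \<le> 5 * (2 * i + 1)"
      using P_index_bound[OF assms(1-3)] assms(4) by simp
    then have "length (Q @ tl (rev Sg)) \<le> Suc (3 * i + 1)"
      using False assms(4) Sg(2) by simp
    then show ?thesis
      using walk_end_in_closed_nbhd[OF graph B1_subset walk_betw_join[OF assms(1) walk_betw_rev[OF Sg(1)]] assms(2)] s(2)
      by simp
  qed
qed

lemma detour_in_nbhd: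
  assumes W: "walk_betw E u W x" "u \<in> B1" "length W \<le> Suc i"
    and xy: "adj E x y"
    and R: "walk_betw E (P ! t) R y" "t < length P" "length R \<le> Suc i"
  shows "\<exists>Z. walk_betw E (hd P) Z x \<and> set Z \<subseteq> closed_nbhd V E (3 * i + 1) B1
    \<and> walk_weight w Z = prefix_weight w P t + walk_weight w R + w {x, y}"
proof -
  let ?N = "closed_nbhd V E (3 * i + 1) B1"
  have Wxy: "walk_betw E u (W @ tl [x, y]) y"
    using walk_betw_join[OF W(1) walk_betw_edge[OF xy]] .
  define Q where "Q = (W @ tl [x, y]) @ tl (rev R)"
  have Q: "walk_betw E u Q (P ! t)"
    unfolding Q_def using walk_betw_join[OF Wxy walk_betw_rev[OF R(1)]] .
  have length_Q: "length Q \<le> 2 * i + 2"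
    using W(3) R(3) by (simp add: Q_def)
  have "set Q \<subseteq> ?N"
    using walk_in_closed_nbhd[OF graph B1_subset Q W(2)] length_Q by simp
  moreover have "set Q = set W \<union> {x, y} \<union> set R"
    unfolding Q_def set_join[OF Wxy walk_betw_rev[OF R(1)]] set_join[OF W(1) walk_betw_edge[OF xy]]
    by simp
  moreover have "set (take (Suc t) P) \<subseteq> ?N"
    using P_prefix_in_nbhd[OF Q W(2) R(2) length_Q] .
  moreover
  have PR: "walk_betw E (hd P) (take (Suc t) P @ tl R) y"
    using walk_betw_join[OF walk_betw_take[OF P_walk R(2)] R(1)] .
  define Z where "Z = (take (Suc t) P @ tl R) @ tl [y, x]"
  have Z: "walk_betw E (hd P) Z x"
    unfolding Z_def using walk_betw_join[OF PR walk_betw_edge[OF adj_sym[OF xy]]] .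
  have "set Z = set (take (Suc t) P) \<union> set R \<union> {x, y}"
    unfolding Z_def set_join[OF PR walk_betw_edge[OF adj_sym[OF xy]]]
      set_join[OF walk_betw_take[OF P_walk R(2)] R(1)] by auto
  moreover have "walk_weight w Z = prefix_weight w P t + walk_weight w R + w {x, y}"
    unfolding Z_def walk_weight_join[OF PR walk_betw_edge[OF adj_sym[OF xy]]]
      walk_weight_join[OF walk_betw_take[OF P_walk R(2)] R(1)] prefix_weight_def
    by (simp add: insert_commute)
  ultimately show ?thesis
    using Z by (intro exI[of _ Z]) auto
qed

end

section \<open>A shortest path between two bipartite balls\<close>

locale bipartite_balls_path =
  fixes V :: "'a set" and E :: "'a set set" and w :: "'a set \<Rightarrow> nat"
    and i k :: nat and B1 B2 :: "'a set" and P :: "'a list"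
  assumes graph: "graph V E"
    and weights: "\<forall>e\<in>E. w e \<in> {3, 4, 5}"
    and k_large: "10 * i + 5 \<le> k"
    and odd_girth: "\<forall>C. is_cycle E C \<and> odd (cycle_weight w C) \<longrightarrow> cycle_weight w C \<ge> 2 * k + 1"
    and B1_subset: "B1 \<subseteq> V" and B2_subset: "B2 \<subseteq> V"
    and far_apart: "set_dist E B1 B2 \<ge> enat (2 * i + 2)"
    and P_path: "path_between E B1 B2 P"
    and P_minimal_path: "\<forall>Q. path_between E B1 B2 Q \<longrightarrow> walk_weight w P \<le> walk_weight w Q"
    and bipartite_B1: "weighted_bipartite E w (closed_nbhd V E (3 * i + 1) B1)"
    and bipartite_B2: "weighted_bipartite E w (closed_nbhd V E (3 * i + 1) B2)"
begin

lemma P_walk: "walk_betw E (hd P) P (last P)"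
  using P_path by (simp add: path_between_def is_path_def walk_betw_def)

lemma P_minimal:
  assumes "walk_betw E u Q v" "u \<in> B1" "v \<in> B2"
  shows "walk_weight w P \<le> walk_weight w Q"
proof -
  obtain Q' where "walk_betw E u Q' v" "distinct Q'" "walk_weight w Q' \<le> walk_weight w Q"
    using walk_betw_shortcut[OF assms(1)] by blast
  then show ?thesis
    using P_minimal_path assms(2,3) by (fastforce simp: path_between_def is_path_def walk_betw_def)
qed

sublocale from_B1: shortest_walk V E w B1 B2 P
  using graph weights B1_subset P_walk P_path P_minimal
  by unfold_locales (auto simp: path_between_def)

sublocale from_B2: shortest_walk V E w B2 B1 "rev P"
proof
  show "walk_betw E (hd (rev P)) (rev P) (last (rev P))"
    using walk_betw_rev[OF P_walk] P_walk walk_betw_nonempty by (simp add: hd_rev last_rev)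
  show "walk_weight w (rev P) \<le> walk_weight w Q" if "walk_betw E u Q v" "u \<in> B2" "v \<in> B1" for u Q v
    using P_minimal[OF walk_betw_rev[OF that(1)] that(3,2)] by simp
qed (use graph weights B2_subset P_path in \<open>auto simp: path_between_def hd_rev last_rev\<close>)

lemma even_short_closed_walk:
  assumes "walk_betw E u Z u" "walk_weight w Z \<le> 2 * k"
  shows "even (walk_weight w Z)"
  using odd_closed_walk_has_odd_cycle[OF graph assms(1)] odd_girth assms(2) by force

lemma edge_parity_P_P:
  assumes Rx: "walk_betw E (P ! s) Rx x" "length Rx \<le> Suc i"
    and Ry: "walk_betw E (P ! t) Ry y" "length Ry \<le> Suc i"
    and st: "s \<le> t" "t < length P" and xy: "adj E x y"
  shows "even (w {x, y} + (walk_weight w Rx + prefix_weight w P s) + (walk_weight w Ry + prefix_weight w P t))"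
proof -
  obtain Sg where Sg: "walk_betw E (P ! s) Sg (P ! t)"
    "prefix_weight w P s + walk_weight w Sg = prefix_weight w P t"
    using from_B1.P_segment[OF st] by blast
  have Rxy: "walk_betw E (P ! s) (Rx @ tl [x, y]) y"
    using walk_betw_join[OF Rx(1) walk_betw_edge[OF xy]] .
  \<comment> \<open>By minimality of P, its segment is no heavier than the detour through the edge xy.\<close>
  have "prefix_weight w P t \<le> prefix_weight w P s + walk_weight w ((Rx @ tl [x, y]) @ tl (rev Ry))"
    using from_B1.prefix_weight_le_add[OF walk_betw_join[OF Rxy walk_betw_rev[OF Ry(1)]]] st by simp
  then have "walk_weight w Sg \<le> walk_weight w Rx + w {x, y} + walk_weight w Ry"
    using Sg(2) unfolding walk_weight_join[OF Rxy walk_betw_rev[OF Ry(1)]]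
      walk_weight_join[OF Rx(1) walk_betw_edge[OF xy]] by simp
  moreover have "walk_weight w Rx \<le> 5 * i" "walk_weight w Ry \<le> 5 * i" "w {x, y} \<le> 5"
    using from_B1.walk_weight_le_5[OF Rx(1)] from_B1.walk_weight_le_5[OF Ry(1)] Rx(2) Ry(2)
      from_B1.weight_bounds(2) xy by (auto simp: adj_def)
  moreover
  have RxSg: "walk_betw E x (rev Rx @ tl Sg) (P ! t)"
    using walk_betw_join[OF walk_betw_rev[OF Rx(1)] Sg(1)] .
  have RxSgRy: "walk_betw E x ((rev Rx @ tl Sg) @ tl Ry) y"
    using walk_betw_join[OF RxSg Ry(1)] .
  define C where "C = ((rev Rx @ tl Sg) @ tl Ry) @ tl [y, x]"
  have C: "walk_betw E x C x"
    unfolding C_def using walk_betw_join[OF RxSgRy walk_betw_edge[OF adj_sym[OF xy]]] .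
  have C_weight: "walk_weight w C = walk_weight w Rx + walk_weight w Sg + walk_weight w Ry + w {x, y}"
    unfolding C_def walk_weight_join[OF RxSgRy walk_betw_edge[OF adj_sym[OF xy]]]
      walk_weight_join[OF RxSg Ry(1)] walk_weight_join[OF walk_betw_rev[OF Rx(1)] Sg(1)]
    by (simp add: insert_commute)
  ultimately have "even (walk_weight w C)"
    using even_short_closed_walk[OF C] k_large by simp
  moreover have "w {x, y} + (walk_weight w Rx + prefix_weight w P s) + (walk_weight w Ry + prefix_weight w P t)
      = walk_weight w C + 2 * prefix_weight w P s"
    using C_weight Sg(2) by simp
  ultimately show ?thesis
    by (metis even_add even_mult_iff even_numeral)
qed

lemma edge_parity_B1_P:
  assumes f1: "parity_potential E w (closed_nbhd V E (3 * i + 1) B1) f1"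
    and x: "x \<in> closed_nbhd V E i B1" and xy: "adj E x y"
    and R: "walk_betw E (P ! t) R y" "t < length P" "length R \<le> Suc i"
  shows "even (w {x, y} + (f1 x + f1 (hd P)) + (walk_weight w R + prefix_weight w P t))"
proof -
  obtain u W where W: "walk_betw E u W x" "u \<in> B1" "length W \<le> Suc i"
    using x unfolding mem_closed_nbhd_iff by blast
  obtain Z where Z: "walk_betw E (hd P) Z x" "set Z \<subseteq> closed_nbhd V E (3 * i + 1) B1"
    "walk_weight w Z = prefix_weight w P t + walk_weight w R + w {x, y}"
    using from_B1.detour_in_nbhd[OF W xy R] by blast
  have "even (walk_weight w Z + f1 (hd P) + f1 x)"
    using parity_potential_walk[OF f1 _ Z(2)] Z(1) by (auto simp: walk_betw_def)
  then show ?thesis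
    by (simp add: Z(3) ac_simps)
qed

lemma edge_parity_B2_P:
  assumes f2: "parity_potential E w (closed_nbhd V E (3 * i + 1) B2) f2"
    and x: "x \<in> closed_nbhd V E i B2" and xy: "adj E x y"
    and R: "walk_betw E (P ! t) R y" "t < length P" "length R \<le> Suc i"
  shows "even (w {x, y} + (f2 x + f2 (last P) + walk_weight w P) + (walk_weight w R + prefix_weight w P t))"
proof -
  define t' where "t' = length P - 1 - t"
  have t': "t' < length (rev P)" "rev P ! t' = P ! t"
    using R(2) by (auto simp: t'_def rev_nth)
  obtain u W where W: "walk_betw E u W x" "u \<in> B2" "length W \<le> Suc i"
    using x unfolding mem_closed_nbhd_iff by blast
  obtain Z where Z: "walk_betw E (hd (rev P)) Z x" "set Z \<subseteq> closed_nbhd V E (3 * i + 1) B2"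
    "walk_weight w Z = prefix_weight w (rev P) t' + walk_weight w R + w {x, y}"
    using from_B2.detour_in_nbhd[OF W xy R(1)[folded t'(2)] t'(1) R(3)] by blast
  have "even (walk_weight w Z + f2 (last P) + f2 x)"
    using parity_potential_walk[OF f2 _ Z(2)] Z(1) by (auto simp: walk_betw_def hd_rev)
  moreover have "w {x, y} + (f2 x + f2 (last P) + walk_weight w P) + (walk_weight w R + prefix_weight w P t)
      = walk_weight w Z + f2 (last P) + f2 x + 2 * prefix_weight w P t"
    using Z(3) prefix_weight_rev[OF R(2), of w] by (simp add: t'_def)
  ultimately show ?thesis
    by (metis even_add even_mult_iff even_numeral)
qed

lemma not_adj_B1_B2:
  assumes "x \<in> closed_nbhd V E i B1" "y \<in> closed_nbhd V E i B2"
  shows "\<not> adj E x y"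
proof
  assume xy: "adj E x y"
  obtain u W1 v W2 where "u \<in> B1" "walk_betw E u W1 x" "length W1 \<le> Suc i"
    and "v \<in> B2" "walk_betw E v W2 y" "length W2 \<le> Suc i"
    using assms unfolding mem_closed_nbhd_iff by blast
  moreover from this have "walk_betw E u ((W1 @ tl [x, y]) @ tl (rev W2)) v"
    using walk_betw_join[OF walk_betw_join[OF _ walk_betw_edge[OF xy]] walk_betw_rev] by blast
  ultimately show False
    using walk_length_ge_set_dist[OF far_apart] by fastforce
qed

definition rung_value :: "'a \<Rightarrow> nat" where
  "rung_value x = (SOME n. \<exists>R t. walk_betw E (P ! t) R x \<and> t < length P \<and> length R \<le> Suc i
     \<and> n = walk_weight w R + prefix_weight w P t)"

lemma rung_valueE:
  assumes "x \<in> closed_nbhd V E i (set P)"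
  obtains R t where "walk_betw E (P ! t) R x" "t < length P" "length R \<le> Suc i"
    "rung_value x = walk_weight w R + prefix_weight w P t"
proof -
  obtain u R where "u \<in> set P" "walk_betw E u R x" "length R \<le> Suc i"
    using assms unfolding mem_closed_nbhd_iff by blast
  moreover obtain t where "t < length P" "P ! t = u"
    using \<open>u \<in> set P\<close> by (metis in_set_conv_nth)
  ultimately have "\<exists>n R t. walk_betw E (P ! t) R x \<and> t < length P \<and> length R \<le> Suc i
      \<and> n = walk_weight w R + prefix_weight w P t"
    by blast
  then have "\<exists>R t. walk_betw E (P ! t) R x \<and> t < length P \<and> length R \<le> Suc i
      \<and> rung_value x = walk_weight w R + prefix_weight w P t"
    unfolding rung_value_def by (rule someI_ex)
  then show thesis
    using that by blast
qed

(* Near P: the rung value.  Near B1 or B2 only: the ball potential, shifted so that it agrees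
   with the rung values at the first or last vertex of P respectively. *)
definition potential :: "('a \<Rightarrow> nat) \<Rightarrow> ('a \<Rightarrow> nat) \<Rightarrow> 'a \<Rightarrow> nat" where
  "potential f1 f2 x =
    (if x \<in> closed_nbhd V E i (set P) then rung_value x
     else if x \<in> closed_nbhd V E i B1 then f1 x + f1 (hd P)
     else f2 x + f2 (last P) + walk_weight w P)"

lemma edge_parity_near_P:
  assumes f1: "parity_potential E w (closed_nbhd V E (3 * i + 1) B1) f1"
    and f2: "parity_potential E w (closed_nbhd V E (3 * i + 1) B2) f2"
    and x: "x \<in> closed_nbhd V E i (B1 \<union> B2 \<union> set P)"
    and y: "y \<in> closed_nbhd V E i (set P)" and xy: "adj E x y"
  shows "even (w {x, y} + potential f1 f2 x + potential f1 f2 y)"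
proof -
  obtain Ry t where Ry: "walk_betw E (P ! t) Ry y" "t < length P" "length Ry \<le> Suc i"
    and y_value: "potential f1 f2 y = walk_weight w Ry + prefix_weight w P t"
    using rung_valueE[OF y] y by (metis potential_def)
  consider (P) "x \<in> closed_nbhd V E i (set P)"
    | (B1) "x \<notin> closed_nbhd V E i (set P)" "x \<in> closed_nbhd V E i B1"
    | (B2) "x \<notin> closed_nbhd V E i (set P)" "x \<notin> closed_nbhd V E i B1" "x \<in> closed_nbhd V E i B2"
    using x by (auto simp: closed_nbhd_Un)
  then show ?thesis
  proof cases
    case P
    obtain Rx s where Rx: "walk_betw E (P ! s) Rx x" "s < length P" "length Rx \<le> Suc i"
      and x_value: "potential f1 f2 x = walk_weight w Rx + prefix_weight w P s"
      using rung_valueE[OF P] P by (metis potential_def)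
    show ?thesis
    proof (cases "s \<le> t")
      case True
      then show ?thesis
        using edge_parity_P_P[OF Rx(1,3) Ry(1,3) True Ry(2) xy] x_value y_value by simp
    next
      case False
      then show ?thesis
        using edge_parity_P_P[OF Ry(1,3) Rx(1,3) _ Rx(2) adj_sym[OF xy]] x_value y_value
        by (simp add: insert_commute ac_simps)
    qed
  next
    case B1
    then show ?thesis
      using edge_parity_B1_P[OF f1 B1(2) xy Ry] y_value by (simp add: potential_def)
  next
    case B2
    then show ?thesis
      using edge_parity_B2_P[OF f2 B2(3) xy Ry] y_value by (simp add: potential_def)
  qed
qed

lemma parity_potential_on_nbhd:
  assumes f1: "parity_potential E w (closed_nbhd V E (3 * i + 1) B1) f1"
    and f2: "parity_potential E w (closed_nbhd V E (3 * i + 1) B2) f2"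
  shows "parity_potential E w (closed_nbhd V E i (B1 \<union> B2 \<union> set P)) (potential f1 f2)"
  unfolding parity_potential_def
proof (intro ballI impI)
  let ?N = "\<lambda>S. closed_nbhd V E i S"
  fix x y assume x: "x \<in> ?N (B1 \<union> B2 \<union> set P)" and y: "y \<in> ?N (B1 \<union> B2 \<union> set P)"
    and xy: "adj E x y"
  consider "y \<in> ?N (set P)" | "x \<in> ?N (set P)" | "x \<notin> ?N (set P)" "y \<notin> ?N (set P)"
    by blast
  then show "even (w {x, y} + potential f1 f2 x + potential f1 f2 y)"
  proof cases
    case 1
    then show ?thesis
      using edge_parity_near_P[OF f1 f2 x _ xy] by blast
  next
    case 2
    then show ?thesis
      using edge_parity_near_P[OF f1 f2 y _ adj_sym[OF xy]] by (simp add: insert_commute ac_simps)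
  next
    case 3
    have small_balls: "?N B1 \<subseteq> closed_nbhd V E (3 * i + 1) B1" "?N B2 \<subseteq> closed_nbhd V E (3 * i + 1) B2"
      by (simp_all add: closed_nbhd_mono)
    have "x \<in> ?N B1 \<union> ?N B2" "y \<in> ?N B1 \<union> ?N B2"
      using 3 x y by (auto simp: closed_nbhd_Un)
    then consider "x \<in> ?N B1" "y \<in> ?N B1" | "x \<notin> ?N B1" "y \<notin> ?N B1" "x \<in> ?N B2" "y \<in> ?N B2"
      using not_adj_B1_B2[of x y] not_adj_B1_B2[of y x] xy adj_sym[OF xy] by blast
    then show ?thesis
    proof cases
      case 1
      then have "even (w {x, y} + f1 x + f1 y)"
        using f1 small_balls(1) xy unfolding parity_potential_def by blast
      then show ?thesis
        using 1 3 by (simp add: potential_def) argo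
    next
      case 2
      then have "even (w {x, y} + f2 x + f2 y)"
        using f2 small_balls(2) xy unfolding parity_potential_def by blast
      then show ?thesis
        using 2 3 by (simp add: potential_def) argo
    qed
  qed
qed

end

theorem corollary4p4:
  fixes V :: "'a set" and E :: "'a set set" and w :: "'a set \<Rightarrow> nat"
    and i k :: nat and B1 B2 :: "'a set" and P :: "'a list"
  assumes "graph V E"
    and "\<forall>e\<in>E. w e \<in> {3, 4, 5}"
    and "i \<ge> 1" and "k \<ge> 10 * i + 35"
    and "\<forall>C. is_cycle E C \<and> odd (cycle_weight w C) \<longrightarrow> cycle_weight w C \<ge> 2 * k + 1"
    and "B1 \<subseteq> V" and "B2 \<subseteq> V"
    and "set_dist E B1 B2 \<ge> enat (2 * i + 2)"
    and "path_between E B1 B2 P"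
    and "\<forall>Q. path_between E B1 B2 Q \<longrightarrow> walk_weight w P \<le> walk_weight w Q"
    and "weighted_bipartite E w (closed_nbhd V E (3 * i + 1) B1)"
    and "weighted_bipartite E w (closed_nbhd V E (3 * i + 1) B2)"
  shows "weighted_bipartite E w (closed_nbhd V E i (B1 \<union> B2 \<union> set P))"
proof -
  interpret bipartite_balls_path V E w i k B1 B2 P
    using assms by unfold_locales auto
  obtain f1 f2 where "parity_potential E w (closed_nbhd V E (3 * i + 1) B1) f1"
    "parity_potential E w (closed_nbhd V E (3 * i + 1) B2) f2"
    using parity_potential_if_weighted_bipartite[OF graph] bipartite_B1 bipartite_B2 by metis
  then show ?thesis
    using weighted_bipartite_if_parity_potential parity_potential_on_nbhd by blast
qed

end
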